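(* Let $k \ge 0$ be an integer. Let $A, B, C, D$ be pairwise disjoint piles of coins, each of size $2^k$, containing exactly two counterfeit coins in total, and suppose it is known that either (one coin of $A$ and one coin of $B$ are counterfeit) or (one coin of $C$ and one coin of $D$ are counterfeit). Then there is an adaptive strategy using at most $k+1$ weighings on a 5-way scale that determines both counterfeit coins.
   Context: Coins look identical; all genuine coins have one common weight, all counterfeit coins have one common weight strictly less than the genuine weight. A weighing places two disjoint sets of coins of equal cardinality on the left and right pans. Let $d$ = (number of counterfeit coins on the left pan) $-$ (number of counterfeit coins on the right pan). A 5-way scale reports MUCH LESS if $d \ge 2$, LESS if $d = 1$, EQUAL if $d = 0$, MORE if $d = -1$, MUCH MORE if $d \le -2$. A strategy chooses each weighing possibly depending on previous outcomes; it determines the counterfeit coins if the sequence of outcomes uniquely identifies them. *)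

theory Defs
  imports Main
begin

datatype outcome = MuchLess | Less | Equal | More | MuchMore

definition weigh :: "'a set \<Rightarrow> 'a set \<Rightarrow> 'a set \<Rightarrow> outcome" where
  "weigh L R F = (let d = int (card (F \<inter> L)) - int (card (F \<inter> R)) in
     if d \<ge> 2 then MuchLess else if d = 1 then Less else if d = 0 then Equal
     else if d = -1 then More else MuchMore)"

datatype 'a strategy = Stop | Weigh "'a set" "'a set" "outcome \<Rightarrow> 'a strategy"

primrec run :: "'a strategy \<Rightarrow> 'a set \<Rightarrow> outcome list" where
  "run Stop = (\<lambda>F. [])"
| "run (Weigh L R next) = (\<lambda>F. weigh L R F # run (next (weigh L R F)) F)"

primrec depth :: "'a strategy \<Rightarrow> nat" where
  "depth Stop = 0"
| "depth (Weigh L R next) = Suc (Max (range (\<lambda>r. depth (next r))))"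

primrec valid :: "'a set \<Rightarrow> 'a strategy \<Rightarrow> bool" where
  "valid U Stop = True"
| "valid U (Weigh L R next) =
     (L \<subseteq> U \<and> R \<subseteq> U \<and> finite L \<and> finite R \<and> L \<inter> R = {} \<and> card L = card R
      \<and> (\<forall>r. valid U (next r)))"

definition determines :: "'a strategy \<Rightarrow> 'a set set \<Rightarrow> bool" where
  "determines T S = inj_on (run T) S"

end

theory Submission
  imports Defs
begin

text \<open>Split every pile into halves, A = A1 \<union> A2 and so on, and weigh A1 \<union> B1
  against C2 \<union> D2. A counterfeit pair from A \<times> B only puts coins on the left pan and one from
  C \<times> D only on the right, so the reading d \<in> {2, 1, 0, -1, -2} leaves the candidates
  A1 \<times> B1, A1 \<times> B2 or A2 \<times> B1, A2 \<times> B2 or C1 \<times> D1, C1 \<times> D2 or C2 \<times> D1, C2 \<times> D2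
  respectively. Each class is again a union of pairs from two of four disjoint piles of size 2^(k-1),
  so the induction hypothesis finishes in k more weighings. For k = 0 one weighing of A against C
  separates the two candidates.\<close>

definition pairs :: "'a set \<Rightarrow> 'a set \<Rightarrow> 'a set set" where
  "pairs X Y = {{x, y} | x y. x \<in> X \<and> y \<in> Y}"

lemma doubleton_in_pairs: "x \<in> X \<Longrightarrow> y \<in> Y \<Longrightarrow> {x, y} \<in> pairs X Y"
  unfolding pairs_def by blast

definition identifies_within :: "'a set \<Rightarrow> nat \<Rightarrow> 'a set set \<Rightarrow> bool" where
  "identifies_within U n S \<longleftrightarrow> (\<exists>T. valid U T \<and> depth T \<le> n \<and> determines T S)"

definition scale :: "int \<Rightarrow> outcome" where
  "scale d = (if d \<ge> 2 then MuchLess else if d = 1 then Less else if d = 0 then Equal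
     else if d = -1 then More else MuchMore)"

lemma weigh_eq_scale: "weigh L R F = scale (int (card (F \<inter> L)) - int (card (F \<inter> R)))"
  by (simp add: weigh_def scale_def Let_def)

lemma card_doubleton_Int:
  "a \<noteq> b \<Longrightarrow> card ({a, b} \<inter> X) = (if a \<in> X then 1 else 0) + (if b \<in> X then 1 else 0)"
  by (cases "a \<in> X"; cases "b \<in> X") (auto simp: Int_insert_left)

lemma UNIV_outcome: "(UNIV :: outcome set) = {MuchLess, Less, Equal, More, MuchMore}"
  by (auto intro: outcome.exhaust)

lemma depth_Weigh_le:
  assumes "\<And>r. depth (f r) \<le> n"
  shows "depth (Weigh L R f) \<le> Suc n"
proof -
  have "finite (range (\<lambda>r. depth (f r)))"
    by (simp add: UNIV_outcome)
  with assms show ?thesis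
    by (simp add: Max_le_iff)
qed

lemma valid_mono: "valid U T \<Longrightarrow> U \<subseteq> V \<Longrightarrow> valid V T"
  by (induction T) auto

lemma determines_Weigh:
  assumes "\<And>F. F \<in> S \<Longrightarrow> F \<in> S' (weigh L R F)"
    and "\<And>r. determines (f r) (S' r)"
  shows "determines (Weigh L R f) S"
  unfolding determines_def
proof (rule inj_onI)
  fix F G
  assume F: "F \<in> S" and G: "G \<in> S" and "run (Weigh L R f) F = run (Weigh L R f) G"
  then have same: "weigh L R F = weigh L R G"
    and "run (f (weigh L R F)) F = run (f (weigh L R F)) G"
    by auto
  moreover have "F \<in> S' (weigh L R F)" and "G \<in> S' (weigh L R F)"
    using assms(1)[OF F] assms(1)[OF G] same by auto
  ultimately show "F = G"
    using assms(2) by (metis determines_def inj_onD)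
qed

lemma identifies_within_mono:
  "identifies_within U n S \<Longrightarrow> U \<subseteq> V \<Longrightarrow> n \<le> m \<Longrightarrow> identifies_within V m S"
  unfolding identifies_within_def by (meson valid_mono order_trans)

lemma identifies_within_0: "(\<And>F G. F \<in> S \<Longrightarrow> G \<in> S \<Longrightarrow> F = G) \<Longrightarrow> identifies_within U 0 S"
  unfolding identifies_within_def determines_def
  by (rule exI[of _ Stop]) (auto intro: inj_onI)

lemma identifies_within_Suc:
  assumes "L \<subseteq> U" "R \<subseteq> U" "finite L" "finite R" "L \<inter> R = {}" "card L = card R"
    and "\<And>F. F \<in> S \<Longrightarrow> F \<in> S' (weigh L R F)"
    and "\<And>r. identifies_within U n (S' r)"
  shows "identifies_within U (Suc n) S"
proof -
  obtain f where f: "\<And>r. valid U (f r) \<and> depth (f r) \<le> n \<and> determines (f r) (S' r)"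
    using assms(8) unfolding identifies_within_def by metis
  have "valid U (Weigh L R f)"
    using assms(1-6) f by simp
  moreover have "depth (Weigh L R f) \<le> Suc n"
    using f by (intro depth_Weigh_le) blast
  moreover have "determines (Weigh L R f) S"
    using assms(7) f by (intro determines_Weigh[where S' = S']) blast+
  ultimately show ?thesis
    unfolding identifies_within_def by blast
qed

lemma split_card_add:
  assumes "card A = m + m'" "0 < m + m'"
  obtains A1 A2 where "A = A1 \<union> A2" "A1 \<inter> A2 = {}" "card A1 = m" "card A2 = m'"
proof -
  have "finite A"
    using assms by (intro card_ge_0_finite) simp
  moreover obtain A1 where "A1 \<subseteq> A" "card A1 = m"
    using obtain_subset_with_card_n[of m A] assms by auto
  ultimately have "card (A - A1) = m'"
    using assms by (simp add: card_Diff_subset finite_subset)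
  with \<open>A1 \<subseteq> A\<close> \<open>card A1 = m\<close> show ?thesis
    using that[of A1 "A - A1"] by blast
qed

definition disjoint_piles :: "nat \<Rightarrow> 'a set \<Rightarrow> 'a set \<Rightarrow> 'a set \<Rightarrow> 'a set \<Rightarrow> bool" where
  "disjoint_piles m A B C D \<longleftrightarrow>
     card A = m \<and> card B = m \<and> card C = m \<and> card D = m \<and>
     A \<inter> B = {} \<and> A \<inter> C = {} \<and> A \<inter> D = {} \<and> B \<inter> C = {} \<and> B \<inter> D = {} \<and> C \<inter> D = {}"

lemma identifies_within_disjoint_piles_1:
  assumes "disjoint_piles 1 A B C D"
  shows "identifies_within (A \<union> B \<union> C \<union> D) 1 (pairs A B \<union> pairs C D)"
proof -
  obtain a b c d where A: "A = {a}" and B: "B = {b}" and C: "C = {c}" and D: "D = {d}"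
    using assms by (auto simp: disjoint_piles_def card_Suc_eq)
  have distinct: "a \<noteq> b" "a \<noteq> c" "a \<noteq> d" "b \<noteq> c" "b \<noteq> d" "c \<noteq> d"
    using assms by (auto simp: disjoint_piles_def A B C D)
  let ?S' = "case_outcome {} {{a, b}} {} {{c, d}} {}"
  show ?thesis
    unfolding One_nat_def
  proof (rule identifies_within_Suc)
    show "F \<in> ?S' (weigh A C F)" if "F \<in> pairs A B \<union> pairs C D" for F
      using that distinct
      by (auto simp: pairs_def A B C D weigh_eq_scale card_doubleton_Int scale_def)
    show "identifies_within (A \<union> B \<union> C \<union> D) 0 (?S' r)" for r
      by (cases r) (auto intro!: identifies_within_0)
  qed (use distinct in \<open>auto simp: A C\<close>)
qed

lemma disjoint_piles_halves:
  assumes "disjoint_piles (2 * m) A B C D" "0 < m"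
  obtains A1 A2 B1 B2 C1 C2 D1 D2
  where "A = A1 \<union> A2" "B = B1 \<union> B2" "C = C1 \<union> C2" "D = D1 \<union> D2"
    and "disjoint_piles m A1 B1 A2 B2" "disjoint_piles m A1 B2 A2 B1"
    and "disjoint_piles m A2 B2 C1 D1" "disjoint_piles m C1 D2 C2 D1"
    and "disjoint_piles m C2 D2 C1 D1"
proof -
  have cards: "card A = m + m" "card B = m + m" "card C = m + m" "card D = m + m"
    using assms(1) by (simp_all add: disjoint_piles_def)
  have "0 < m + m"
    using assms(2) by simp
  obtain A1 A2 where A: "A = A1 \<union> A2" "A1 \<inter> A2 = {}" "card A1 = m" "card A2 = m"
    by (rule split_card_add[OF cards(1) \<open>0 < m + m\<close>])
  obtain B1 B2 where B: "B = B1 \<union> B2" "B1 \<inter> B2 = {}" "card B1 = m" "card B2 = m"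
    by (rule split_card_add[OF cards(2) \<open>0 < m + m\<close>])
  obtain C1 C2 where C: "C = C1 \<union> C2" "C1 \<inter> C2 = {}" "card C1 = m" "card C2 = m"
    by (rule split_card_add[OF cards(3) \<open>0 < m + m\<close>])
  obtain D1 D2 where D: "D = D1 \<union> D2" "D1 \<inter> D2 = {}" "card D1 = m" "card D2 = m"
    by (rule split_card_add[OF cards(4) \<open>0 < m + m\<close>])
  have "A \<inter> B = {}" "A \<inter> C = {}" "A \<inter> D = {}" "B \<inter> C = {}" "B \<inter> D = {}" "C \<inter> D = {}"
    using assms(1) by (simp_all add: disjoint_piles_def)
  then show ?thesis
    using A(2-4) B(2-4) C(2-4) D(2-4) unfolding A(1) B(1) C(1) D(1)
    by (intro that[OF A(1) B(1) C(1) D(1)])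
      (simp_all add: disjoint_piles_def Int_Un_distrib Int_Un_distrib2 Int_commute)
qed

text \<open>The readings 2 and -2 leave a single class; it is padded with a second, disjoint one so that
  every class has the shape the induction hypothesis accepts.\<close>

definition halving_classes :: "'a set \<Rightarrow> 'a set \<Rightarrow> 'a set \<Rightarrow> 'a set \<Rightarrow>
    'a set \<Rightarrow> 'a set \<Rightarrow> 'a set \<Rightarrow> 'a set \<Rightarrow> outcome \<Rightarrow> 'a set set"
  where "halving_classes A1 A2 B1 B2 C1 C2 D1 D2 =
    case_outcome (pairs A1 B1 \<union> pairs A2 B2) (pairs A1 B2 \<union> pairs A2 B1)
      (pairs A2 B2 \<union> pairs C1 D1) (pairs C1 D2 \<union> pairs C2 D1) (pairs C2 D2 \<union> pairs C1 D1)"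

lemma weigh_halves:
  assumes "A = A1 \<union> A2" "B = B1 \<union> B2" "C = C1 \<union> C2" "D = D1 \<union> D2"
    and "A \<inter> B = {}" "A \<inter> C = {}" "A \<inter> D = {}" "B \<inter> C = {}" "B \<inter> D = {}" "C \<inter> D = {}"
    and "F \<in> pairs A B \<union> pairs C D"
  shows "F \<in> halving_classes A1 A2 B1 B2 C1 C2 D1 D2 (weigh (A1 \<union> B1) (C2 \<union> D2) F)"
proof -
  from assms(11) consider (AB) x y where "F = {x, y}" "x \<in> A" "y \<in> B"
    | (CD) x y where "F = {x, y}" "x \<in> C" "y \<in> D"
    unfolding pairs_def by blast
  then show ?thesis
  proof cases
    case AB
    have "x \<notin> B" "x \<notin> C" "x \<notin> D" "y \<notin> A" "y \<notin> C" "y \<notin> D" "x \<noteq> y"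
      using AB assms(5-10) by blast+
    with AB assms(1-4) show ?thesis
      by (cases "x \<in> A1"; cases "y \<in> B1") (simp_all add: weigh_eq_scale scale_def
        card_doubleton_Int halving_classes_def doubleton_in_pairs)
  next
    case CD
    have "x \<notin> A" "x \<notin> B" "x \<notin> D" "y \<notin> A" "y \<notin> B" "y \<notin> C" "x \<noteq> y"
      using CD assms(5-10) by blast+
    with CD assms(1-4) show ?thesis
      by (cases "x \<in> C2"; cases "y \<in> D2") (simp_all add: weigh_eq_scale scale_def
        card_doubleton_Int halving_classes_def doubleton_in_pairs)
  qed
qed

lemma identifies_within_disjoint_piles_double:
  fixes A B C D :: "'a set"
  assumes IH: "\<And>W X Y Z :: 'a set. disjoint_piles m W X Y Z \<Longrightarrow>
      identifies_within (W \<union> X \<union> Y \<union> Z) n (pairs W X \<union> pairs Y Z)"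
    and piles: "disjoint_piles (2 * m) A B C D" and "0 < m"
  shows "identifies_within (A \<union> B \<union> C \<union> D) (Suc n) (pairs A B \<union> pairs C D)"
proof -
  obtain A1 A2 B1 B2 C1 C2 D1 D2
    where A: "A = A1 \<union> A2" and B: "B = B1 \<union> B2" and C: "C = C1 \<union> C2" and D: "D = D1 \<union> D2"
      and halves: "disjoint_piles m A1 B1 A2 B2" "disjoint_piles m A1 B2 A2 B1"
        "disjoint_piles m A2 B2 C1 D1" "disjoint_piles m C1 D2 C2 D1" "disjoint_piles m C2 D2 C1 D1"
    using disjoint_piles_halves[OF piles \<open>0 < m\<close>] by blast
  let ?U = "A \<union> B \<union> C \<union> D"
  let ?classes = "halving_classes A1 A2 B1 B2 C1 C2 D1 D2"
  have finite: "finite A1" "finite B1" "finite C2" "finite D2"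
    using halves(1,4) \<open>0 < m\<close> by (auto simp: disjoint_piles_def intro: card_ge_0_finite)
  show ?thesis
  proof (rule identifies_within_Suc[where S' = ?classes])
    show "A1 \<union> B1 \<subseteq> ?U" "C2 \<union> D2 \<subseteq> ?U" "finite (A1 \<union> B1)" "finite (C2 \<union> D2)"
      using finite by (auto simp: A B C D)
    show "card (A1 \<union> B1) = card (C2 \<union> D2)"
      using finite halves(1,4) by (simp add: disjoint_piles_def card_Un_disjoint Int_commute)
    show "(A1 \<union> B1) \<inter> (C2 \<union> D2) = {}"
      using piles by (simp add: disjoint_piles_def A B C D Int_Un_distrib Int_Un_distrib2)
    show "F \<in> ?classes (weigh (A1 \<union> B1) (C2 \<union> D2) F)" if "F \<in> pairs A B \<union> pairs C D" for F
      using piles that by (intro weigh_halves[OF A B C D]) (simp_all add: disjoint_piles_def)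
    have lift: "identifies_within ?U n (pairs W X \<union> pairs Y Z)"
      if "disjoint_piles m W X Y Z" "W \<union> X \<union> Y \<union> Z \<subseteq> ?U" for W X Y Z
      using IH[OF that(1)] that(2) order_refl by (rule identifies_within_mono)
    show "identifies_within ?U n (?classes r)" for r
      by (cases r; simp add: halving_classes_def; rule lift) (auto simp: halves A B C D)
  qed
qed

lemma identifies_within_disjoint_piles:
  "disjoint_piles (2 ^ k) A B C D \<Longrightarrow>
    identifies_within (A \<union> B \<union> C \<union> D) (Suc k) (pairs A B \<union> pairs C D)"
proof (induction k arbitrary: A B C D)
  case 0
  then show ?case
    using identifies_within_disjoint_piles_1 by simp
next
  case (Suc k)
  have "disjoint_piles (2 * 2 ^ k) A B C D"
    using Suc.prems by simp
  with Suc.IH show ?case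
    by (rule identifies_within_disjoint_piles_double) auto
qed

theorem mainTheorem6:
  fixes k :: nat and A B C D :: "'a set"
  assumes "finite A" "finite B" "finite C" "finite D"
    and "card A = 2 ^ k" "card B = 2 ^ k" "card C = 2 ^ k" "card D = 2 ^ k"
    and "A \<inter> B = {}" "A \<inter> C = {}" "A \<inter> D = {}"
    and "B \<inter> C = {}" "B \<inter> D = {}" "C \<inter> D = {}"
  shows "\<exists>T. valid (A \<union> B \<union> C \<union> D) T \<and> depth T \<le> k + 1 \<and>
           determines T ({{a, b} | a b. a \<in> A \<and> b \<in> B} \<union> {{c, d} | c d. c \<in> C \<and> d \<in> D})"
  using identifies_within_disjoint_piles[of k A B C D] assms
  unfolding disjoint_piles_def identifies_within_def pairs_def by simp

end
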